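(* The variety generated by the quasivariety of Bochvar algebras (equivalently, the variety generated by $\mathbf{WK}^e$) is axiomatised by the following identities, in the type $\langle\wedge,\vee,\neg,J_2,0,1\rangle$: (K1) $x\vee x\approx x$; (K2) $x\vee y\approx y\vee x$; (K3) $x\vee(y\vee z)\approx(x\vee y)\vee z$; (K4) $\neg\neg x\approx x$; (K5) $x\wedge y\approx\neg(\neg x\vee\neg y)$; (K6) $x\wedge(\neg x\vee y)\approx x\wedge y$; (K7) $0\vee x\approx x$; (K8) $1\approx\neg 0$; (K9) $J_2x\vee\neg J_2x\approx 1$; (K10) $x\vee J_2y\approx x\vee J_2(x\vee y)$; (K11) $x\wedge J_2x\approx x$; (K12) $J_2(x\wedge\neg x)\approx 0$.
   Context: $\mathbf{WK}^e$ is the three-element algebra on $\{0,\tfrac12,1\}$ of type $\langle\wedge,\vee,\neg,J_2,0,1\rangle$ (arities $2,2,1,1,0,0$). Its operations are: - $\neg$ swaps $0$ and $1$ and fixes $\tfrac12$; - $\wedge,\vee$ are the Boolean operations on $\{0,1\}$ and return $\tfrac12$ whenever some argument is $\tfrac12$; - $J_2(1)=1$ and $J_2(\tfrac12)=J_2(0)=0$. The quasivariety of Bochvar algebras is $\mathsf{BCA}=ISP(\mathbf{WK}^e)$. *)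

theory Defs
  imports Main
begin

datatype wk = WZ | WH | WO  (* 0, 1/2, 1 *)

fun wneg :: "wk \<Rightarrow> wk" where
  "wneg WZ = WO" | "wneg WH = WH" | "wneg WO = WZ"

fun wjoin :: "wk \<Rightarrow> wk \<Rightarrow> wk" where
  "wjoin WH y = WH" | "wjoin x WH = WH" | "wjoin WZ WZ = WZ" | "wjoin x y = WO"

fun wmeet :: "wk \<Rightarrow> wk \<Rightarrow> wk" where
  "wmeet WH y = WH" | "wmeet x WH = WH" | "wmeet WO WO = WO" | "wmeet x y = WZ"

fun wJ2 :: "wk \<Rightarrow> wk" where
  "wJ2 WO = WO" | "wJ2 WH = WZ" | "wJ2 WZ = WZ"

record 'a alg =
  carrier :: "'a set"
  meet :: "'a \<Rightarrow> 'a \<Rightarrow> 'a"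
  join :: "'a \<Rightarrow> 'a \<Rightarrow> 'a"
  neg :: "'a \<Rightarrow> 'a"
  jtwo :: "'a \<Rightarrow> 'a"
  zero :: "'a"
  one :: "'a"

definition algebra :: "('a, 'b) alg_scheme \<Rightarrow> bool" where
  "algebra A \<longleftrightarrow>
     (\<forall>x\<in>carrier A. \<forall>y\<in>carrier A. meet A x y \<in> carrier A \<and> join A x y \<in> carrier A) \<and>
     (\<forall>x\<in>carrier A. neg A x \<in> carrier A \<and> jtwo A x \<in> carrier A) \<and>
     zero A \<in> carrier A \<and> one A \<in> carrier A"

definition wk_power :: "'i set \<Rightarrow> ('i \<Rightarrow> wk) alg" where
  "wk_power I = \<lparr> carrier = {f. \<forall>i. i \<notin> I \<longrightarrow> f i = undefined},
     meet = (\<lambda>f g i. if i \<in> I then wmeet (f i) (g i) else undefined),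
     join = (\<lambda>f g i. if i \<in> I then wjoin (f i) (g i) else undefined),
     neg = (\<lambda>f i. if i \<in> I then wneg (f i) else undefined),
     jtwo = (\<lambda>f i. if i \<in> I then wJ2 (f i) else undefined),
     zero = (\<lambda>i. if i \<in> I then WZ else undefined),
     one = (\<lambda>i. if i \<in> I then WO else undefined) \<rparr>"

definition subuniverse :: "'a set \<Rightarrow> ('a, 'b) alg_scheme \<Rightarrow> bool" where
  "subuniverse B A \<longleftrightarrow> B \<subseteq> carrier A \<and>
     (\<forall>x\<in>B. \<forall>y\<in>B. meet A x y \<in> B \<and> join A x y \<in> B) \<and>
     (\<forall>x\<in>B. neg A x \<in> B \<and> jtwo A x \<in> B) \<and> zero A \<in> B \<and> one A \<in> B"

definition hom_onto :: "('c \<Rightarrow> 'a) \<Rightarrow> 'c set \<Rightarrow> ('c, 'd) alg_scheme \<Rightarrow> ('a, 'b) alg_scheme \<Rightarrow> bool" where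
  "hom_onto h B P A \<longleftrightarrow> h ` B = carrier A \<and>
     (\<forall>x\<in>B. \<forall>y\<in>B. h (meet P x y) = meet A (h x) (h y) \<and> h (join P x y) = join A (h x) (h y)) \<and>
     (\<forall>x\<in>B. h (neg P x) = neg A (h x) \<and> h (jtwo P x) = jtwo A (h x)) \<and>
     h (zero P) = zero A \<and> h (one P) = one A"

definition in_HSP :: "'i set \<Rightarrow> ('a, 'b) alg_scheme \<Rightarrow> bool" where
  "in_HSP I A \<longleftrightarrow> algebra A \<and>
     (\<exists>B (h :: ('i \<Rightarrow> wk) \<Rightarrow> 'a). subuniverse B (wk_power I) \<and> hom_onto h B (wk_power I) A)"

text \<open>Membership in the variety V(WK^e) = HSP(WK^e), for an algebra with carrier in type 'a.
  Index sets are taken in the type 'a \<Rightarrow> wk, which is large enough.\<close>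
definition in_V_WK :: "('a, 'b) alg_scheme \<Rightarrow> bool" where
  "in_V_WK A \<longleftrightarrow> (\<exists>I :: ('a \<Rightarrow> wk) set. in_HSP I A)"

definition sat_K :: "('a, 'b) alg_scheme \<Rightarrow> bool" where
  "sat_K A \<longleftrightarrow> (\<forall>x\<in>carrier A. \<forall>y\<in>carrier A. \<forall>z\<in>carrier A.
     join A x x = x \<and>
     join A x y = join A y x \<and>
     join A x (join A y z) = join A (join A x y) z \<and>
     neg A (neg A x) = x \<and>
     meet A x y = neg A (join A (neg A x) (neg A y)) \<and>
     meet A x (join A (neg A x) y) = meet A x y \<and>
     join A (zero A) x = x \<and>
     one A = neg A (zero A) \<and>
     join A (jtwo A x) (neg A (jtwo A x)) = one A \<and>
     join A x (jtwo A y) = join A x (jtwo A (join A x y)) \<and>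
     meet A x (jtwo A x) = x \<and>
     jtwo A (meet A x (neg A x)) = zero A)"

end

theory Submission
  imports Defs
begin

(* Soundness: WK^e satisfies K1-K12, and identities pass to powers, subalgebras and
   homomorphic images.

   Completeness: in a model A of K1-K12 the regular elements (those with x \<squnion> 1 = 1) form a
   Boolean algebra, J maps A onto it preserving meets, and every x is determined by J x
   and its fibre unit x \<squnion> 1, because x = J x \<sqinter> (x \<squnion> 1). Each ultrafilter M of the regular
   elements gives a homomorphism A \<rightarrow> WK^e, sending x to 1, 0 or 1/2 according as J x \<in> M,
   J (\<sim>x) \<in> M or neither; by the ultrafilter theorem these homomorphisms determine J x.
   Adding, for every c, a coordinate that records whether x lies in a fibre below that of c
   determines x completely, which represents A as a homomorphic image of a subalgebra of a
   power of WK^e. *)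

section \<open>Soundness\<close>

lemma wk_identities:
  "wjoin x x = x" "wjoin x y = wjoin y x" "wjoin x (wjoin y w) = wjoin (wjoin x y) w"
  "wneg (wneg x) = x" "wmeet x y = wneg (wjoin (wneg x) (wneg y))"
  "wmeet x (wjoin (wneg x) y) = wmeet x y" "wjoin WZ x = x" "WO = wneg WZ"
  "wjoin (wJ2 x) (wneg (wJ2 x)) = WO" "wjoin x (wJ2 y) = wjoin x (wJ2 (wjoin x y))"
  "wmeet x (wJ2 x) = x" "wJ2 (wmeet x (wneg x)) = WZ"
  by (cases x; cases y; cases w; simp)+

lemma wk_eq_WH_iff:
  "wjoin a b = WH \<longleftrightarrow> a = WH \<or> b = WH" "wmeet a b = WH \<longleftrightarrow> a = WH \<or> b = WH"
  "wneg a = WH \<longleftrightarrow> a = WH" "wJ2 a \<noteq> WH"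
  by (cases a; cases b; simp)+

lemma wk_power_simps:
  "carrier (wk_power I) = {f. \<forall>i. i \<notin> I \<longrightarrow> f i = undefined}"
  "meet (wk_power I) f g = (\<lambda>i. if i \<in> I then wmeet (f i) (g i) else undefined)"
  "join (wk_power I) f g = (\<lambda>i. if i \<in> I then wjoin (f i) (g i) else undefined)"
  "neg (wk_power I) f = (\<lambda>i. if i \<in> I then wneg (f i) else undefined)"
  "jtwo (wk_power I) f = (\<lambda>i. if i \<in> I then wJ2 (f i) else undefined)"
  "zero (wk_power I) = (\<lambda>i. if i \<in> I then WZ else undefined)"
  "one (wk_power I) = (\<lambda>i. if i \<in> I then WO else undefined)"
  by (simp_all add: wk_power_def)

lemma algebra_wk_power: "algebra (wk_power I)"
  unfolding algebra_def wk_power_simps by simp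

lemma sat_K_wk_power: "sat_K (wk_power I)"
  unfolding sat_K_def wk_power_simps by (intro ballI conjI ext) (auto intro: wk_identities)

definition K_eqs :: "('a, 'b) alg_scheme \<Rightarrow> 'a \<Rightarrow> 'a \<Rightarrow> 'a \<Rightarrow> bool" where
  "K_eqs A x y z \<longleftrightarrow>
     join A x x = x \<and>
     join A x y = join A y x \<and>
     join A x (join A y z) = join A (join A x y) z \<and>
     neg A (neg A x) = x \<and>
     meet A x y = neg A (join A (neg A x) (neg A y)) \<and>
     meet A x (join A (neg A x) y) = meet A x y \<and>
     join A (zero A) x = x \<and>
     one A = neg A (zero A) \<and>
     join A (jtwo A x) (neg A (jtwo A x)) = one A \<and>
     join A x (jtwo A y) = join A x (jtwo A (join A x y)) \<and>
     meet A x (jtwo A x) = x \<and>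
     jtwo A (meet A x (neg A x)) = zero A"

lemma sat_K_iff_K_eqs: "sat_K A \<longleftrightarrow> (\<forall>x\<in>carrier A. \<forall>y\<in>carrier A. \<forall>z\<in>carrier A. K_eqs A x y z)"
  unfolding sat_K_def K_eqs_def ..

lemma sat_K_hom_image:
  assumes "sat_K P" and "subuniverse B P" and "hom_onto h B P A"
  shows "sat_K A"
  unfolding sat_K_iff_K_eqs
proof (intro ballI)
  have B: "B \<subseteq> carrier P"
    and closed: "\<And>f g. f \<in> B \<Longrightarrow> g \<in> B \<Longrightarrow> meet P f g \<in> B" "\<And>f g. f \<in> B \<Longrightarrow> g \<in> B \<Longrightarrow> join P f g \<in> B"
      "\<And>f. f \<in> B \<Longrightarrow> neg P f \<in> B" "\<And>f. f \<in> B \<Longrightarrow> jtwo P f \<in> B" "zero P \<in> B" "one P \<in> B"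
    using assms(2) unfolding subuniverse_def by blast+
  have hom: "\<And>f g. f \<in> B \<Longrightarrow> g \<in> B \<Longrightarrow> meet A (h f) (h g) = h (meet P f g)"
    "\<And>f g. f \<in> B \<Longrightarrow> g \<in> B \<Longrightarrow> join A (h f) (h g) = h (join P f g)"
    "\<And>f. f \<in> B \<Longrightarrow> neg A (h f) = h (neg P f)" "\<And>f. f \<in> B \<Longrightarrow> jtwo A (h f) = h (jtwo P f)"
    "zero A = h (zero P)" "one A = h (one P)"
    using assms(3) unfolding hom_onto_def by simp_all
  fix x y z assume "x \<in> carrier A" "y \<in> carrier A" "z \<in> carrier A"
  then obtain f g k where fgk: "f \<in> B" "g \<in> B" "k \<in> B" and xyz: "x = h f" "y = h g" "z = h k"
    using assms(3) unfolding hom_onto_def by (metis imageE)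
  then have "K_eqs P f g k"
    using assms(1) B unfolding sat_K_iff_K_eqs by blast
  then show "K_eqs A x y z"
    unfolding xyz K_eqs_def using fgk by (simp only: hom closed)
qed

lemma in_HSP_sat_K: "in_HSP I A \<Longrightarrow> sat_K A"
  unfolding in_HSP_def using sat_K_hom_image[OF sat_K_wk_power] by blast

section \<open>Algebras satisfying K1--K12\<close>

locale K_algebra =
  fixes A :: "('a, 'b) alg_scheme"
  assumes algebra: "algebra A" and identities: "sat_K A"
begin

abbreviation C where "C \<equiv> carrier A"
abbreviation join_op (infixl "\<squnion>" 65) where "x \<squnion> y \<equiv> join A x y"
abbreviation meet_op (infixl "\<sqinter>" 70) where "x \<sqinter> y \<equiv> meet A x y"
abbreviation neg_op ("\<sim>_" [80] 80) where "\<sim>x \<equiv> neg A x"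
abbreviation J where "J \<equiv> jtwo A"
abbreviation zero_el ("\<zero>") where "\<zero> \<equiv> zero A"
abbreviation one_el ("\<one>") where "\<one> \<equiv> one A"
abbreviation le (infix "\<preceq>" 50) where "x \<preceq> y \<equiv> x \<squnion> y = y"

lemma closed [simp, intro]:
  "x \<in> C \<Longrightarrow> y \<in> C \<Longrightarrow> x \<squnion> y \<in> C" "x \<in> C \<Longrightarrow> y \<in> C \<Longrightarrow> x \<sqinter> y \<in> C"
  "x \<in> C \<Longrightarrow> \<sim>x \<in> C" "x \<in> C \<Longrightarrow> J x \<in> C" "\<zero> \<in> C" "\<one> \<in> C"
  using algebra unfolding algebra_def by blast+

lemma K_identities: "x \<in> C \<Longrightarrow> y \<in> C \<Longrightarrow> z \<in> C \<Longrightarrow> K_eqs A x y z"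
  using identities unfolding sat_K_iff_K_eqs by blast

lemma join_idem: "x \<in> C \<Longrightarrow> x \<squnion> x = x"
  using K_identities[of x x x] unfolding K_eqs_def by blast

lemma join_comm: "x \<in> C \<Longrightarrow> y \<in> C \<Longrightarrow> x \<squnion> y = y \<squnion> x"
  using K_identities[of x y x] unfolding K_eqs_def by blast

lemma join_assoc: "x \<in> C \<Longrightarrow> y \<in> C \<Longrightarrow> w \<in> C \<Longrightarrow> x \<squnion> y \<squnion> w = x \<squnion> (y \<squnion> w)"
  using K_identities[of x y w] unfolding K_eqs_def by simp

lemma neg_neg [simp]: "x \<in> C \<Longrightarrow> \<sim> \<sim>x = x"
  using K_identities[of x x x] unfolding K_eqs_def by blast

lemma meet_conv_join: "x \<in> C \<Longrightarrow> y \<in> C \<Longrightarrow> x \<sqinter> y = \<sim>(\<sim>x \<squnion> \<sim>y)"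
  using K_identities[of x y x] unfolding K_eqs_def by blast

lemma meet_neg_join: "x \<in> C \<Longrightarrow> y \<in> C \<Longrightarrow> x \<sqinter> (\<sim>x \<squnion> y) = x \<sqinter> y"
  using K_identities[of x y x] unfolding K_eqs_def by blast

lemma zero_join: "x \<in> C \<Longrightarrow> \<zero> \<squnion> x = x"
  using K_identities[of x x x] unfolding K_eqs_def by blast

lemma one_eq_neg_zero: "\<one> = \<sim>\<zero>"
  using K_identities[of \<zero> \<zero> \<zero>] unfolding K_eqs_def by blast

lemma J_join_neg_J: "x \<in> C \<Longrightarrow> J x \<squnion> \<sim>J x = \<one>"
  using K_identities[of x x x] unfolding K_eqs_def by blast

lemma join_J_join: "x \<in> C \<Longrightarrow> y \<in> C \<Longrightarrow> x \<squnion> J y = x \<squnion> J (x \<squnion> y)"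
  using K_identities[of x y x] unfolding K_eqs_def by blast

lemma meet_J: "x \<in> C \<Longrightarrow> x \<sqinter> J x = x"
  using K_identities[of x x x] unfolding K_eqs_def by blast

lemma J_meet_neg: "x \<in> C \<Longrightarrow> J (x \<sqinter> \<sim>x) = \<zero>"
  using K_identities[of x x x] unfolding K_eqs_def by blast

lemma join_left_commute: "x \<in> C \<Longrightarrow> y \<in> C \<Longrightarrow> w \<in> C \<Longrightarrow> x \<squnion> (y \<squnion> w) = y \<squnion> (x \<squnion> w)"
  by (metis join_assoc join_comm)

lemma join_left_idem: "x \<in> C \<Longrightarrow> y \<in> C \<Longrightarrow> x \<squnion> (x \<squnion> y) = x \<squnion> y"
  by (metis join_assoc join_idem)

lemma neg_join: "x \<in> C \<Longrightarrow> y \<in> C \<Longrightarrow> \<sim>(x \<squnion> y) = \<sim>x \<sqinter> \<sim>y"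
  by (simp add: meet_conv_join)

lemma neg_meet: "x \<in> C \<Longrightarrow> y \<in> C \<Longrightarrow> \<sim>(x \<sqinter> y) = \<sim>x \<squnion> \<sim>y"
  by (simp add: meet_conv_join)

lemma meet_comm: "x \<in> C \<Longrightarrow> y \<in> C \<Longrightarrow> x \<sqinter> y = y \<sqinter> x"
  by (simp add: meet_conv_join join_comm)

lemma meet_assoc: "x \<in> C \<Longrightarrow> y \<in> C \<Longrightarrow> w \<in> C \<Longrightarrow> x \<sqinter> y \<sqinter> w = x \<sqinter> (y \<sqinter> w)"
  by (simp add: meet_conv_join join_assoc)

lemma meet_left_commute: "x \<in> C \<Longrightarrow> y \<in> C \<Longrightarrow> w \<in> C \<Longrightarrow> x \<sqinter> (y \<sqinter> w) = y \<sqinter> (x \<sqinter> w)"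
  by (metis meet_assoc meet_comm)

lemma meet_idem: "x \<in> C \<Longrightarrow> x \<sqinter> x = x"
  by (simp add: meet_conv_join join_idem)

lemma meet_left_idem: "x \<in> C \<Longrightarrow> y \<in> C \<Longrightarrow> x \<sqinter> (x \<sqinter> y) = x \<sqinter> y"
  by (metis meet_assoc meet_idem)

lemma join_neg_meet: "x \<in> C \<Longrightarrow> y \<in> C \<Longrightarrow> x \<squnion> (\<sim>x \<sqinter> y) = x \<squnion> y"
  using arg_cong[OF meet_neg_join[of "\<sim>x" "\<sim>y"], of "neg A"] by (simp add: neg_meet neg_join)

lemma neg_one: "\<sim>\<one> = \<zero>"
  by (simp add: one_eq_neg_zero)

lemma join_zero: "x \<in> C \<Longrightarrow> x \<squnion> \<zero> = x"
  using join_comm[of x \<zero>] by (simp add: zero_join)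

lemma one_meet: "x \<in> C \<Longrightarrow> \<one> \<sqinter> x = x"
  by (simp add: meet_conv_join neg_one zero_join)

lemma meet_one: "x \<in> C \<Longrightarrow> x \<sqinter> \<one> = x"
  using meet_comm[of x \<one>] by (simp add: one_meet)

lemma meet_neg_self: "x \<in> C \<Longrightarrow> x \<sqinter> \<sim>x = x \<sqinter> \<zero>"
  using meet_neg_join[of x \<zero>] by (simp add: join_zero)

lemma join_neg_self: "x \<in> C \<Longrightarrow> x \<squnion> \<sim>x = x \<squnion> \<one>"
  using join_neg_meet[of x \<one>] by (simp add: meet_one)

lemma neg_join_one: "x \<in> C \<Longrightarrow> \<sim>x \<squnion> \<one> = x \<squnion> \<one>"
  by (metis join_comm join_neg_self neg_neg closed(3))

lemma J_zero: "J \<zero> = \<zero>"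
  using J_meet_neg[of \<zero>] by (simp add: meet_neg_self meet_idem)

lemma join_J_self: "x \<in> C \<Longrightarrow> x \<squnion> J x = x"
  using join_J_join[of x \<zero>] by (simp add: J_zero join_zero)

lemma J_join_one: "x \<in> C \<Longrightarrow> J x \<squnion> \<one> = \<one>"
  using J_join_neg_J join_neg_self by simp

lemma J_meet_join_one: "x \<in> C \<Longrightarrow> J x \<sqinter> (x \<squnion> \<one>) = x"
proof -
  assume x: "x \<in> C"
  have "\<sim>x = \<sim>x \<sqinter> \<sim>J x"
    using arg_cong[OF join_J_self[OF x], of "neg A"] x by (simp add: neg_join)
  then have "x \<squnion> \<one> = x \<squnion> \<sim>J x"
    using join_neg_self[OF x] join_neg_meet[of x "\<sim>J x"] x by simp
  then have "J x \<sqinter> (x \<squnion> \<one>) = J x \<sqinter> x"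
    using meet_neg_join[of "J x" x] x by (simp add: join_comm)
  then show ?thesis
    using meet_J[OF x] x by (simp add: meet_comm)
qed

lemma J_join_meet_neg: "x \<in> C \<Longrightarrow> J x \<squnion> (x \<sqinter> \<sim>x) = x"
proof -
  assume x: "x \<in> C"
  have "\<sim>x = \<sim>x \<squnion> \<sim>J x"
    using arg_cong[OF meet_J[OF x], of "neg A"] x by (simp add: neg_meet)
  then have "x \<sqinter> \<sim>x = x \<sqinter> \<sim>J x"
    using meet_neg_join[of x "\<sim>J x"] x by simp
  then show ?thesis
    using join_neg_meet[of "J x" x] join_J_self[OF x] x by (simp add: meet_comm join_comm)
qed

lemma le_trans: "x \<in> C \<Longrightarrow> y \<in> C \<Longrightarrow> w \<in> C \<Longrightarrow> x \<preceq> y \<Longrightarrow> y \<preceq> w \<Longrightarrow> x \<preceq> w"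
  using join_assoc[of x y w] by simp

lemma join_le_iff: "x \<in> C \<Longrightarrow> y \<in> C \<Longrightarrow> w \<in> C \<Longrightarrow> x \<squnion> y \<preceq> w \<longleftrightarrow> x \<preceq> w \<and> y \<preceq> w"
proof (intro iffI conjI)
  assume x: "x \<in> C" and y: "y \<in> C" and w: "w \<in> C" and xyw: "x \<squnion> y \<preceq> w"
  have "y \<squnion> (x \<squnion> y) = x \<squnion> y"
    using x y by (simp add: join_left_commute[of y x y] join_idem)
  then show "x \<preceq> w" "y \<preceq> w"
    using xyw join_assoc[of x "x \<squnion> y" w] join_assoc[of y "x \<squnion> y" w] x y w
    by (simp_all add: join_left_idem)
next
  assume "x \<in> C" "y \<in> C" "w \<in> C" "x \<preceq> w \<and> y \<preceq> w"
  then show "x \<squnion> y \<preceq> w"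
    by (simp add: join_assoc)
qed

subsection \<open>Regular elements\<close>

definition Reg :: "'a set" where
  "Reg = {x \<in> C. x \<preceq> \<one>}"

lemma Reg_carrier [simp, intro]: "x \<in> Reg \<Longrightarrow> x \<in> C"
  by (simp add: Reg_def)

lemma Reg_le_one: "x \<in> Reg \<Longrightarrow> x \<preceq> \<one>"
  unfolding Reg_def by blast

lemma one_join_Reg: "x \<in> Reg \<Longrightarrow> \<one> \<squnion> x = \<one>"
  using Reg_le_one[of x] join_comm[of \<one> x] by simp

lemma join_Reg [simp, intro]: "x \<in> Reg \<Longrightarrow> y \<in> Reg \<Longrightarrow> x \<squnion> y \<in> Reg"
  unfolding Reg_def by (simp add: join_assoc)

lemma neg_Reg [simp, intro]: "x \<in> Reg \<Longrightarrow> \<sim>x \<in> Reg"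
  unfolding Reg_def by (simp add: neg_join_one)

lemma meet_Reg [simp, intro]: "x \<in> Reg \<Longrightarrow> y \<in> Reg \<Longrightarrow> x \<sqinter> y \<in> Reg"
  by (simp add: meet_conv_join join_Reg neg_Reg)

lemma zero_Reg [simp, intro]: "\<zero> \<in> Reg"
  unfolding Reg_def by (simp add: zero_join)

lemma one_Reg [simp, intro]: "\<one> \<in> Reg"
  unfolding Reg_def by (simp add: join_idem)

lemma J_Reg [simp, intro]: "x \<in> C \<Longrightarrow> J x \<in> Reg"
  unfolding Reg_def by (simp add: J_join_one)

lemma J_Reg_id: "x \<in> Reg \<Longrightarrow> J x = x"
  using J_meet_join_one[of x] by (simp add: Reg_le_one meet_one)

lemma Reg_join_neg: "x \<in> Reg \<Longrightarrow> x \<squnion> \<sim>x = \<one>"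
  by (simp add: join_neg_self Reg_le_one)

lemma Reg_meet_neg: "x \<in> Reg \<Longrightarrow> x \<sqinter> \<sim>x = \<zero>"
  using Reg_join_neg[of x] by (simp add: meet_conv_join join_comm[of "\<sim>x" x] neg_one)

lemma Reg_meet_zero: "x \<in> Reg \<Longrightarrow> x \<sqinter> \<zero> = \<zero>"
  using meet_neg_self[of x] Reg_meet_neg[of x] by simp

lemma Reg_meet_join_absorb: "x \<in> Reg \<Longrightarrow> y \<in> Reg \<Longrightarrow> x \<sqinter> (x \<squnion> y) = x"
proof -
  assume x: "x \<in> Reg" and y: "y \<in> Reg"
  have "\<sim>x \<squnion> (x \<squnion> y) = (x \<squnion> \<sim>x) \<squnion> y"
    using x y by (simp add: join_assoc join_left_commute[of "\<sim>x" x y])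
  also have "\<dots> = \<one>"
    using x y by (simp add: Reg_join_neg one_join_Reg)
  finally show ?thesis
    using meet_neg_join[of x "x \<squnion> y"] x y by (simp add: meet_one)
qed

lemma Reg_join_meet_absorb: "x \<in> Reg \<Longrightarrow> y \<in> Reg \<Longrightarrow> x \<squnion> (x \<sqinter> y) = x"
  using arg_cong[OF Reg_meet_join_absorb[of "\<sim>x" "\<sim>y"], of "neg A"]
  by (auto simp: neg_meet meet_conv_join)

lemma Reg_le_iff_meet: "x \<in> Reg \<Longrightarrow> y \<in> Reg \<Longrightarrow> x \<preceq> y \<longleftrightarrow> x \<sqinter> y = x"
proof
  assume "x \<in> Reg" "y \<in> Reg" "x \<preceq> y"
  then show "x \<sqinter> y = x"
    using Reg_meet_join_absorb[of x y] by simp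
next
  assume "x \<in> Reg" "y \<in> Reg" "x \<sqinter> y = x"
  then show "x \<preceq> y"
    using Reg_join_meet_absorb[of y x] join_comm[of x y] meet_comm[of x y] by simp
qed

lemma Reg_distrib: "x \<in> Reg \<Longrightarrow> y \<in> Reg \<Longrightarrow> w \<in> Reg \<Longrightarrow> x \<sqinter> (y \<squnion> w) = x \<sqinter> y \<squnion> x \<sqinter> w"
proof -
  assume x: "x \<in> Reg" and y: "y \<in> Reg" and w: "w \<in> Reg"
  define e where "e = x \<sqinter> (y \<squnion> w)"
  define d where "d = x \<sqinter> y \<squnion> x \<sqinter> w"
  have e: "e \<in> Reg" and d: "d \<in> Reg"
    unfolding e_def d_def using x y w by auto
  have le_e: "x \<sqinter> v \<preceq> e" if v: "v \<in> Reg" and v': "v \<sqinter> (y \<squnion> w) = v" for v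
  proof -
    have "x \<sqinter> v \<sqinter> e = x \<sqinter> (x \<sqinter> (v \<sqinter> (y \<squnion> w)))"
      unfolding e_def using x y w v by (simp add: meet_assoc meet_left_commute[of v x])
    then show ?thesis
      using Reg_le_iff_meet[of "x \<sqinter> v" e] x v v' e by (simp add: meet_left_idem meet_Reg)
  qed
  have "x \<sqinter> y \<preceq> e" "x \<sqinter> w \<preceq> e"
    using le_e[OF y] le_e[OF w] Reg_meet_join_absorb[OF y w] Reg_meet_join_absorb[OF w y]
      join_comm[of y w] y w by auto
  then have de: "d \<preceq> e"
    unfolding d_def using x y w e by (simp add: join_le_iff)
  have "x \<sqinter> \<sim>d = x \<sqinter> (\<sim>x \<squnion> \<sim>y) \<sqinter> (\<sim>x \<squnion> \<sim>w)"
    unfolding d_def using x y w by (simp add: neg_join neg_meet meet_assoc)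
  also have "\<dots> = \<sim>y \<sqinter> (x \<sqinter> (\<sim>x \<squnion> \<sim>w))"
    using x y w by (simp add: meet_neg_join meet_assoc meet_left_commute[of x "\<sim>y"])
  also have "\<dots> = x \<sqinter> \<sim>(y \<squnion> w)"
    using x y w by (simp add: meet_neg_join neg_join meet_left_commute[of "\<sim>y" x])
  finally have xd: "x \<sqinter> \<sim>d = x \<sqinter> \<sim>(y \<squnion> w)" .
  have "\<sim>d \<sqinter> e = (y \<squnion> w) \<sqinter> (x \<sqinter> \<sim>d)"
    unfolding e_def using x y w d
    by (simp add: meet_comm[of "\<sim>d"] meet_assoc meet_left_commute[of "y \<squnion> w" x])
  also have "\<dots> = x \<sqinter> ((y \<squnion> w) \<sqinter> \<sim>(y \<squnion> w))"
    unfolding xd using x y w by (simp add: meet_left_commute[of "y \<squnion> w" x])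
  also have "\<dots> = \<zero>"
    using x y w by (simp add: join_Reg Reg_meet_neg Reg_meet_zero)
  finally have "\<sim>d \<sqinter> e = \<zero>" .
  then have "d = d \<squnion> e"
    using join_neg_meet[of d e] d e by (simp add: join_zero)
  then show ?thesis
    using de unfolding d_def e_def by simp
qed

lemma Reg_distrib_join: "x \<in> Reg \<Longrightarrow> y \<in> Reg \<Longrightarrow> w \<in> Reg \<Longrightarrow> x \<squnion> y \<sqinter> w = (x \<squnion> y) \<sqinter> (x \<squnion> w)"
  using arg_cong[OF Reg_distrib[of "\<sim>x" "\<sim>y" "\<sim>w"], of "neg A"]
  by (auto simp: neg_join neg_meet)

lemma Reg_le_of_meet_neg: "p \<in> Reg \<Longrightarrow> q \<in> Reg \<Longrightarrow> p \<sqinter> \<sim>q = \<zero> \<Longrightarrow> p \<preceq> q"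
proof -
  assume p: "p \<in> Reg" and q: "q \<in> Reg" and pq: "p \<sqinter> \<sim>q = \<zero>"
  have "p = p \<sqinter> (q \<squnion> \<sim>q)"
    using p q by (simp add: Reg_join_neg meet_one)
  also have "\<dots> = p \<sqinter> q"
    using p q pq by (simp add: Reg_distrib[of p q "\<sim>q"] neg_Reg join_zero)
  finally show ?thesis
    using Reg_le_iff_meet p q by simp
qed

lemma Reg_meet_le: "x \<in> Reg \<Longrightarrow> y \<in> Reg \<Longrightarrow> x \<sqinter> y \<preceq> x"
  using Reg_le_iff_meet[of "x \<sqinter> y" x] meet_comm[of "x \<sqinter> y" x] by (simp add: meet_left_idem)

lemma Reg_le_meet: "x \<in> Reg \<Longrightarrow> y \<in> Reg \<Longrightarrow> w \<in> Reg \<Longrightarrow> x \<preceq> y \<Longrightarrow> x \<preceq> w \<Longrightarrow> x \<preceq> y \<sqinter> w"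
  by (simp add: Reg_distrib_join)

lemma Reg_meet_le_meet:
  assumes "a \<in> Reg" "b \<in> Reg" "x \<in> Reg" "y \<in> Reg" "z \<in> Reg"
    and "a \<sqinter> x \<preceq> y" "b \<sqinter> x \<preceq> z"
  shows "a \<sqinter> b \<sqinter> x \<preceq> y \<sqinter> z"
proof -
  have "a \<sqinter> b \<sqinter> x \<preceq> a \<sqinter> x" "a \<sqinter> b \<sqinter> x \<preceq> b \<sqinter> x"
    using Reg_meet_le[of "a \<sqinter> x" b] Reg_meet_le[of "b \<sqinter> x" a] assms
    by (simp_all add: meet_assoc meet_comm[of x] meet_left_commute[of b a])
  then have "a \<sqinter> b \<sqinter> x \<preceq> y" "a \<sqinter> b \<sqinter> x \<preceq> z"
    using le_trans[of "a \<sqinter> b \<sqinter> x" "a \<sqinter> x" y] le_trans[of "a \<sqinter> b \<sqinter> x" "b \<sqinter> x" z] assms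
    by simp_all
  then show ?thesis
    using Reg_le_meet assms by simp
qed

lemma join_J_neg_meet: "x \<in> C \<Longrightarrow> y \<in> C \<Longrightarrow> x \<squnion> J (\<sim>x \<sqinter> y) = x \<squnion> J y"
  using join_J_join[of x "\<sim>x \<sqinter> y"] join_J_join[of x y] by (simp add: join_neg_meet)

lemma meet_J_meet: "x \<in> C \<Longrightarrow> y \<in> C \<Longrightarrow> x \<sqinter> J (x \<sqinter> y) = x \<sqinter> J y"
  using join_J_neg_meet[of "\<sim>x" y] meet_neg_join[of x "J (x \<sqinter> y)"] meet_neg_join[of x "J y"]
  by simp

lemma J_meet_le: "x \<in> C \<Longrightarrow> y \<in> C \<Longrightarrow> J (x \<sqinter> y) \<preceq> J x"
proof -
  assume x: "x \<in> C" and y: "y \<in> C"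
  have "x \<sqinter> \<sim>J x = x \<sqinter> (J x \<sqinter> \<sim>J x)"
    using meet_J[OF x] meet_assoc[of x "J x" "\<sim>J x"] x by simp
  then have "x \<sqinter> \<sim>J x = x \<sqinter> \<zero>"
    using x by (simp add: Reg_meet_neg)
  then have "\<sim>J x \<sqinter> (x \<sqinter> y) = x \<sqinter> \<zero> \<sqinter> y"
    using meet_left_commute[of "\<sim>J x" x y] meet_assoc[of x "\<sim>J x" y] x y by simp
  also have "\<dots> = (x \<sqinter> y) \<sqinter> \<sim>(x \<sqinter> y)"
    using x y by (simp add: meet_assoc meet_comm[of \<zero> y] meet_neg_self)
  finally have "\<sim>J x \<sqinter> (x \<sqinter> y) = (x \<sqinter> y) \<sqinter> \<sim>(x \<sqinter> y)" .
  then have "\<sim>J x \<sqinter> J (x \<sqinter> y) = \<zero>"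
    using meet_J_meet[of "\<sim>J x" "x \<sqinter> y"] x y by (simp add: J_meet_neg Reg_meet_zero neg_Reg)
  then show ?thesis
    using Reg_le_of_meet_neg[of "J (x \<sqinter> y)" "J x"] x y by (simp add: meet_comm)
qed

lemma J_meet_Reg: "x \<in> C \<Longrightarrow> p \<in> Reg \<Longrightarrow> J (x \<sqinter> p) = J x \<sqinter> p"
proof -
  assume x: "x \<in> C" and p: "p \<in> Reg"
  have "J (p \<sqinter> x) \<sqinter> p = J (p \<sqinter> x)"
    using J_meet_le[of p x] Reg_le_iff_meet[of "J (p \<sqinter> x)" p] x p by (simp add: J_Reg_id)
  then have "J (p \<sqinter> x) = p \<sqinter> J x"
    using meet_J_meet[of p x] x p by (simp add: meet_comm)
  then show ?thesis
    using x p by (simp add: meet_comm)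
qed

lemma J_meet: "x \<in> C \<Longrightarrow> y \<in> C \<Longrightarrow> J (x \<sqinter> y) = J x \<sqinter> J y"
proof -
  assume x: "x \<in> C" and y: "y \<in> C"
  have "J x \<sqinter> J (x \<sqinter> y) = J x \<sqinter> J y"
    using arg_cong[OF meet_J_meet[OF x y], of J] x y by (simp add: J_meet_Reg)
  moreover have "J (x \<sqinter> y) \<sqinter> J x = J (x \<sqinter> y)"
    using J_meet_le[OF x y] Reg_le_iff_meet x y by auto
  ultimately show ?thesis
    using x y by (simp add: meet_comm)
qed

lemma J_meet_J_neg: "x \<in> C \<Longrightarrow> J x \<sqinter> J (\<sim>x) = \<zero>"
  using J_meet[of x "\<sim>x"] by (simp add: J_meet_neg)

lemma J_le_J_join_one: "x \<in> C \<Longrightarrow> J x \<preceq> J (x \<squnion> \<one>)"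
proof -
  assume x: "x \<in> C"
  have "x \<sqinter> (x \<squnion> \<one>) = x"
    using meet_neg_join[of x x] x by (simp add: join_comm[of "\<sim>x" x] join_neg_self meet_idem)
  then show ?thesis
    using J_meet[of x "x \<squnion> \<one>"] Reg_le_iff_meet[of "J x" "J (x \<squnion> \<one>)"] x by simp
qed

lemma J_join_one_eq_join: "x \<in> C \<Longrightarrow> J (x \<squnion> \<one>) = J x \<squnion> J (\<sim>x)"
proof -
  assume x: "x \<in> C"
  define d where "d = J x \<squnion> J (\<sim>x)"
  have d: "d \<in> Reg"
    unfolding d_def using x by auto
  have "x \<squnion> \<sim>x = (J x \<squnion> (x \<sqinter> \<sim>x)) \<squnion> (J (\<sim>x) \<squnion> (x \<sqinter> \<sim>x))"
    using J_join_meet_neg[of x] J_join_meet_neg[of "\<sim>x"] x by (simp add: meet_comm[of "\<sim>x" x])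
  also have "\<dots> = d \<squnion> (x \<sqinter> \<sim>x)"
    unfolding d_def using x by (simp add: join_assoc join_left_commute[of "x \<sqinter> \<sim>x"] join_idem)
  finally have "x \<squnion> \<one> = d \<squnion> (x \<sqinter> \<sim>x)"
    using x by (simp add: join_neg_self)
  moreover have "d \<squnion> J (x \<sqinter> \<sim>x) = d \<squnion> J (d \<squnion> (x \<sqinter> \<sim>x))"
    using join_J_join[of d "x \<sqinter> \<sim>x"] x d by simp
  ultimately have "J (x \<squnion> \<one>) \<preceq> d"
    using x d by (simp add: J_meet_neg join_zero join_comm[of d])
  moreover have "d \<preceq> J (x \<squnion> \<one>)"
    unfolding d_def using J_le_J_join_one[of x] J_le_J_join_one[of "\<sim>x"] x
    by (simp add: join_le_iff neg_join_one)
  ultimately show ?thesis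
    unfolding d_def using x by (simp add: join_comm[of "J (x \<squnion> \<one>)"])
qed

lemma neg_join_join_one: "x \<in> C \<Longrightarrow> y \<in> C \<Longrightarrow> \<sim>x \<squnion> (y \<squnion> \<one>) = x \<squnion> (y \<squnion> \<one>)"
  using neg_join_one[of x] join_left_commute[of "\<sim>x" y \<one>] join_left_commute[of x y \<one>] by simp

lemma meet_join_one_eq_join: "x \<in> C \<Longrightarrow> y \<in> C \<Longrightarrow> (x \<squnion> \<one>) \<sqinter> (y \<squnion> \<one>) = (x \<squnion> \<one>) \<squnion> (y \<squnion> \<one>)"
proof -
  assume x: "x \<in> C" and y: "y \<in> C"
  define n where "n = x \<squnion> \<one>"
  define k where "k = n \<squnion> (y \<squnion> \<one>)"
  have n: "n \<in> C" and k: "k \<in> C"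
    unfolding n_def k_def using x y by auto
  have nk: "n \<sqinter> (y \<squnion> \<one>) = n \<sqinter> k"
    using meet_neg_join[of n "y \<squnion> \<one>"] neg_join_join_one[of n y] n y unfolding k_def by simp
  have "\<sim>k \<squnion> n = k \<squnion> n"
    using neg_join_join_one[of k x] k x unfolding n_def by simp
  also have "\<dots> = k"
    unfolding k_def using n y by (simp add: join_comm[of _ n] join_left_idem)
  finally have "\<sim>k \<squnion> n = k" .
  then have "k \<sqinter> n = k"
    using meet_neg_join[of k n] k n by (simp add: meet_idem)
  then show ?thesis
    using nk n k unfolding n_def[symmetric] k_def[symmetric] by (simp add: meet_comm)
qed

lemma J_join_join_one: "x \<in> C \<Longrightarrow> y \<in> C \<Longrightarrow> J (x \<squnion> y \<squnion> \<one>) = J (x \<squnion> \<one>) \<sqinter> J (y \<squnion> \<one>)"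
proof -
  assume x: "x \<in> C" and y: "y \<in> C"
  have "x \<squnion> y \<squnion> \<one> = (x \<squnion> \<one>) \<squnion> (y \<squnion> \<one>)"
    using x y by (simp add: join_assoc join_left_commute[of \<one> y] join_left_idem join_idem)
  then show ?thesis
    using x y by (simp add: meet_join_one_eq_join[symmetric] J_meet)
qed

subsection \<open>Ultrafilters of the regular elements\<close>

definition proper_filter :: "'a set \<Rightarrow> bool" where
  "proper_filter F \<longleftrightarrow> F \<subseteq> Reg \<and> \<one> \<in> F \<and> \<zero> \<notin> F \<and> (\<forall>x\<in>F. \<forall>y\<in>F. x \<sqinter> y \<in> F) \<and>
     (\<forall>x\<in>F. \<forall>y\<in>Reg. x \<preceq> y \<longrightarrow> y \<in> F)"

definition ultrafilter :: "'a set \<Rightarrow> bool" where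
  "ultrafilter M \<longleftrightarrow> proper_filter M \<and> (\<forall>x\<in>Reg. x \<in> M \<or> \<sim>x \<in> M)"

lemma principal_filter:
  assumes c: "c \<in> Reg" and nonzero: "c \<noteq> \<zero>"
  shows "proper_filter {y \<in> Reg. c \<preceq> y}"
  unfolding proper_filter_def
proof (intro conjI ballI impI)
  show "\<one> \<in> {y \<in> Reg. c \<preceq> y}" "\<zero> \<notin> {y \<in> Reg. c \<preceq> y}"
    using c nonzero by (auto simp: Reg_le_one join_zero)
  show "x \<sqinter> y \<in> {y \<in> Reg. c \<preceq> y}" if "x \<in> {y \<in> Reg. c \<preceq> y}" "y \<in> {y \<in> Reg. c \<preceq> y}" for x y
    using that c Reg_le_meet[of c x y] by simp
  show "y \<in> {y \<in> Reg. c \<preceq> y}" if "x \<in> {y \<in> Reg. c \<preceq> y}" "y \<in> Reg" "x \<preceq> y" for x y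
    using that c le_trans[of c x y] by simp
qed blast

lemma proper_filter_Union_chain:
  assumes "\<C> \<noteq> {}" and "subset.chain {F. proper_filter F} \<C>"
  shows "proper_filter (\<Union>\<C>)"
proof -
  have filters: "\<And>F. F \<in> \<C> \<Longrightarrow> proper_filter F"
    and total: "\<And>F G. F \<in> \<C> \<Longrightarrow> G \<in> \<C> \<Longrightarrow> F \<subseteq> G \<or> G \<subseteq> F"
    using assms(2) unfolding subset_chain_def by blast+
  have meet_closed: "x \<sqinter> y \<in> \<Union>\<C>" if xy: "x \<in> \<Union>\<C>" "y \<in> \<Union>\<C>" for x y
  proof -
    obtain F G where "F \<in> \<C>" "G \<in> \<C>" "x \<in> F" "y \<in> G"
      using xy by blast
    then obtain H where "H \<in> \<C>" "x \<in> H" "y \<in> H"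
      using total by blast
    then show ?thesis
      using filters[of H] unfolding proper_filter_def by blast
  qed
  show ?thesis
    using assms(1) filters meet_closed unfolding proper_filter_def by blast
qed

lemma filter_extend:
  assumes M: "proper_filter M" and x: "x \<in> Reg" and disjoint: "\<forall>m\<in>M. m \<sqinter> x \<noteq> \<zero>"
  shows "proper_filter {y \<in> Reg. \<exists>m\<in>M. m \<sqinter> x \<preceq> y}"
  unfolding proper_filter_def
proof (intro conjI ballI impI)
  have MReg: "M \<subseteq> Reg" and one: "\<one> \<in> M" and meets: "\<And>m m'. m \<in> M \<Longrightarrow> m' \<in> M \<Longrightarrow> m \<sqinter> m' \<in> M"
    using M unfolding proper_filter_def by blast+
  show "\<one> \<in> {y \<in> Reg. \<exists>m\<in>M. m \<sqinter> x \<preceq> y}"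
    using one x Reg_le_one[of "\<one> \<sqinter> x"] by auto
  show "\<zero> \<notin> {y \<in> Reg. \<exists>m\<in>M. m \<sqinter> x \<preceq> y}"
  proof
    assume "\<zero> \<in> {y \<in> Reg. \<exists>m\<in>M. m \<sqinter> x \<preceq> y}"
    then obtain m where "m \<in> M" "m \<sqinter> x \<preceq> \<zero>"
      by blast
    moreover have "m \<sqinter> x \<squnion> \<zero> = m \<sqinter> x"
      using \<open>m \<in> M\<close> MReg x by (simp add: join_zero subset_iff)
    ultimately show False
      using disjoint by simp
  qed
  fix y1 y2 assume "y1 \<in> {y \<in> Reg. \<exists>m\<in>M. m \<sqinter> x \<preceq> y}" "y2 \<in> {y \<in> Reg. \<exists>m\<in>M. m \<sqinter> x \<preceq> y}"
  then obtain m1 m2 where y: "y1 \<in> Reg" "y2 \<in> Reg" and m: "m1 \<in> M" "m2 \<in> M"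
    and le: "m1 \<sqinter> x \<preceq> y1" "m2 \<sqinter> x \<preceq> y2"
    by blast
  have "m1 \<sqinter> m2 \<sqinter> x \<preceq> y1 \<sqinter> y2"
    using Reg_meet_le_meet[of m1 m2 x y1 y2] m MReg x y le by auto
  then show "y1 \<sqinter> y2 \<in> {y \<in> Reg. \<exists>m\<in>M. m \<sqinter> x \<preceq> y}"
    using meets[OF m] y by blast
next
  fix y v assume "y \<in> {y \<in> Reg. \<exists>m\<in>M. m \<sqinter> x \<preceq> y}" "v \<in> Reg" "y \<preceq> v"
  then obtain m where "m \<in> M" "m \<sqinter> x \<preceq> y" "y \<in> Reg" "v \<in> Reg" "y \<preceq> v"
    by blast
  moreover have "m \<in> Reg"
    using \<open>m \<in> M\<close> M unfolding proper_filter_def by blast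
  ultimately show "v \<in> {y \<in> Reg. \<exists>m\<in>M. m \<sqinter> x \<preceq> y}"
    using le_trans[of "m \<sqinter> x" y v] x by auto
qed blast

lemma maximal_filter_ultrafilter:
  assumes M: "proper_filter M" and maximal: "\<And>F. proper_filter F \<Longrightarrow> M \<subseteq> F \<Longrightarrow> F = M"
  shows "ultrafilter M"
  unfolding ultrafilter_def
proof (intro conjI ballI M)
  fix x assume x: "x \<in> Reg"
  have MReg: "M \<subseteq> Reg" and one: "\<one> \<in> M" and up: "\<And>m y. m \<in> M \<Longrightarrow> y \<in> Reg \<Longrightarrow> m \<preceq> y \<Longrightarrow> y \<in> M"
    using M unfolding proper_filter_def by blast+
  show "x \<in> M \<or> \<sim>x \<in> M"
  proof (cases "\<forall>m\<in>M. m \<sqinter> x \<noteq> \<zero>")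
    case True
    let ?G = "{y \<in> Reg. \<exists>m\<in>M. m \<sqinter> x \<preceq> y}"
    have "M \<subseteq> ?G"
    proof
      fix m assume "m \<in> M"
      then show "m \<in> ?G"
        using Reg_meet_le[of m x] MReg x by blast
    qed
    moreover have "\<one> \<sqinter> x \<preceq> x"
      using x by (simp add: one_meet join_idem)
    then have "x \<in> ?G"
      using one x by blast
    ultimately have "x \<in> M"
      using maximal[OF filter_extend[OF M x True]] by blast
    then show ?thesis ..
  next
    case False
    then obtain m where m: "m \<in> M" "m \<sqinter> x = \<zero>"
      by blast
    then have "m \<preceq> \<sim>x"
      using Reg_le_of_meet_neg[of m "\<sim>x"] MReg x by auto
    then show ?thesis
      using up[OF m(1)] x by simp
  qed
qed

lemma ultrafilter_exists:
  assumes c: "c \<in> Reg" and nonzero: "c \<noteq> \<zero>"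
  obtains M where "ultrafilter M" "c \<in> M"
proof -
  let ?\<A> = "{F. proper_filter F \<and> c \<in> F}"
  have "{y \<in> Reg. c \<preceq> y} \<in> ?\<A>"
    using principal_filter[OF c nonzero] c by (simp add: join_idem)
  then have "?\<A> \<noteq> {}"
    by blast
  moreover have "\<Union>\<C> \<in> ?\<A>" if "\<C> \<noteq> {}" "subset.chain ?\<A> \<C>" for \<C>
    using that proper_filter_Union_chain[of \<C>] unfolding subset_chain_def by blast
  ultimately obtain M where "M \<in> ?\<A>" and maximal: "\<forall>F\<in>?\<A>. M \<subseteq> F \<longrightarrow> F = M"
    using subset_Zorn_nonempty[of ?\<A>] by blast
  then have "ultrafilter M"
    using maximal_filter_ultrafilter[of M] by blast
  with \<open>M \<in> ?\<A>\<close> show ?thesis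
    using that by blast
qed

lemma ultrafilter_meet_iff:
  "ultrafilter M \<Longrightarrow> x \<in> Reg \<Longrightarrow> y \<in> Reg \<Longrightarrow> x \<sqinter> y \<in> M \<longleftrightarrow> x \<in> M \<and> y \<in> M"
  unfolding ultrafilter_def proper_filter_def
  using Reg_meet_le[of x y] Reg_meet_le[of y x] meet_comm[of x y] by auto

lemma ultrafilter_neg_iff: "ultrafilter M \<Longrightarrow> x \<in> Reg \<Longrightarrow> \<sim>x \<in> M \<longleftrightarrow> x \<notin> M"
  using ultrafilter_meet_iff[of M x "\<sim>x"] Reg_meet_neg[of x]
  unfolding ultrafilter_def proper_filter_def by auto

lemma ultrafilter_join_iff:
  "ultrafilter M \<Longrightarrow> x \<in> Reg \<Longrightarrow> y \<in> Reg \<Longrightarrow> x \<squnion> y \<in> M \<longleftrightarrow> x \<in> M \<or> y \<in> M"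
  using ultrafilter_neg_iff[of M "\<sim>x \<sqinter> \<sim>y"] ultrafilter_meet_iff[of M "\<sim>x" "\<sim>y"]
    ultrafilter_neg_iff[of M x] ultrafilter_neg_iff[of M y]
  by (simp add: neg_meet)

lemma Reg_separation:
  assumes p: "p \<in> Reg" and q: "q \<in> Reg" and "p \<noteq> q"
  obtains M where "ultrafilter M" "p \<in> M \<longleftrightarrow> q \<notin> M"
proof -
  have separate: "\<exists>M. ultrafilter M \<and> x \<in> M \<and> y \<notin> M"
    if x: "x \<in> Reg" and y: "y \<in> Reg" and "x \<sqinter> \<sim>y \<noteq> \<zero>" for x y
  proof -
    obtain M where M: "ultrafilter M" "x \<sqinter> \<sim>y \<in> M"
      using ultrafilter_exists[of "x \<sqinter> \<sim>y"] x y \<open>x \<sqinter> \<sim>y \<noteq> \<zero>\<close> by auto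
    then show ?thesis
      using ultrafilter_meet_iff[of M x "\<sim>y"] ultrafilter_neg_iff[of M y] x y by auto
  qed
  have "p \<sqinter> \<sim>q \<noteq> \<zero> \<or> q \<sqinter> \<sim>p \<noteq> \<zero>"
    using Reg_le_of_meet_neg[OF p q] Reg_le_of_meet_neg[OF q p] join_comm[of p q] p q \<open>p \<noteq> q\<close>
    by auto
  then show ?thesis
    using separate[OF p q] separate[OF q p] that by blast
qed

definition hom_WK :: "('a \<Rightarrow> wk) \<Rightarrow> bool" where
  "hom_WK f \<longleftrightarrow>
     (\<forall>x\<in>C. \<forall>y\<in>C. f (x \<squnion> y) = wjoin (f x) (f y) \<and> f (x \<sqinter> y) = wmeet (f x) (f y)) \<and>
     (\<forall>x\<in>C. f (\<sim>x) = wneg (f x) \<and> f (J x) = wJ2 (f x)) \<and> f \<zero> = WZ \<and> f \<one> = WO"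

definition ultra_val :: "'a set \<Rightarrow> 'a \<Rightarrow> wk" where
  "ultra_val M x = (if J x \<in> M then WO else if J (\<sim>x) \<in> M then WZ else WH)"

context
  fixes M assumes M: "ultrafilter M"
begin

lemma zero_notin_ultrafilter: "\<zero> \<notin> M" and one_in_ultrafilter: "\<one> \<in> M"
  using M unfolding ultrafilter_def proper_filter_def by blast+

lemma ultra_val_Reg: "x \<in> Reg \<Longrightarrow> ultra_val M x = (if x \<in> M then WO else WZ)"
  unfolding ultra_val_def using ultrafilter_neg_iff[OF M] by (simp add: J_Reg_id)

lemma J_ultrafilter_exclusive: "x \<in> C \<Longrightarrow> \<not> (J x \<in> M \<and> J (\<sim>x) \<in> M)"
  using ultrafilter_meet_iff[OF M, of "J x" "J (\<sim>x)"] J_meet_J_neg[of x] zero_notin_ultrafilter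
  by auto

lemma ultra_val_neg: "x \<in> C \<Longrightarrow> ultra_val M (\<sim>x) = wneg (ultra_val M x)"
  using J_ultrafilter_exclusive[of x] unfolding ultra_val_def by auto

lemma ultra_val_J: "x \<in> C \<Longrightarrow> ultra_val M (J x) = wJ2 (ultra_val M x)"
  using ultrafilter_neg_iff[OF M, of "J x"] J_ultrafilter_exclusive[of x]
  unfolding ultra_val_def by (auto simp: J_Reg_id)

lemma ultra_val_join: "x \<in> C \<Longrightarrow> y \<in> C \<Longrightarrow> ultra_val M (x \<squnion> y) = wjoin (ultra_val M x) (ultra_val M y)"
proof -
  assume x: "x \<in> C" and y: "y \<in> C"
  have classical: "J (z \<squnion> \<one>) \<in> M \<longleftrightarrow> J z \<in> M \<or> J (\<sim>z) \<in> M" if "z \<in> C" for z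
    using ultrafilter_join_iff[OF M] that by (simp add: J_join_one_eq_join)
  have "J (\<sim>(x \<squnion> y)) \<in> M \<longleftrightarrow> J (\<sim>x) \<in> M \<and> J (\<sim>y) \<in> M"
    using ultrafilter_meet_iff[OF M] x y by (simp add: neg_join J_meet)
  moreover have "J (x \<squnion> y \<squnion> \<one>) \<in> M \<longleftrightarrow> J (x \<squnion> \<one>) \<in> M \<and> J (y \<squnion> \<one>) \<in> M"
    using ultrafilter_meet_iff[OF M] x y by (simp add: J_join_join_one)
  ultimately show ?thesis
    using classical[of x] classical[of y] classical[of "x \<squnion> y"] x y
      J_ultrafilter_exclusive[of x] J_ultrafilter_exclusive[of y] J_ultrafilter_exclusive[of "x \<squnion> y"]
    unfolding ultra_val_def by auto
qed

lemma ultra_val_meet: "x \<in> C \<Longrightarrow> y \<in> C \<Longrightarrow> ultra_val M (x \<sqinter> y) = wmeet (ultra_val M x) (ultra_val M y)"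
  by (simp add: meet_conv_join ultra_val_neg ultra_val_join wk_identities(5))

lemma hom_WK_ultra_val: "hom_WK (ultra_val M)"
proof -
  have "ultra_val M \<zero> = WZ" "ultra_val M \<one> = WO"
    using zero_notin_ultrafilter one_in_ultrafilter by (simp_all add: ultra_val_Reg)
  then show ?thesis
    unfolding hom_WK_def by (simp add: ultra_val_neg ultra_val_J ultra_val_join ultra_val_meet)
qed

end

lemma J_eq_if_hom_WK_eq:
  assumes x: "x \<in> C" and y: "y \<in> C" and agree: "\<And>f. hom_WK f \<Longrightarrow> f x = f y"
  shows "J x = J y"
proof (rule ccontr)
  assume "J x \<noteq> J y"
  then obtain M where M: "ultrafilter M" and separated: "J x \<in> M \<longleftrightarrow> J y \<notin> M"
    using Reg_separation[of "J x" "J y"] x y by auto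
  have "ultra_val M (J x) = ultra_val M (J y)"
    using agree[OF hom_WK_ultra_val[OF M]] x y by (simp add: ultra_val_J[OF M])
  then show False
    using separated x y by (simp add: ultra_val_Reg[OF M] split: if_splits)
qed

subsection \<open>Representation in a power of WK^e\<close>

lemma neg_le_join_one_iff: "x \<in> C \<Longrightarrow> c \<in> C \<Longrightarrow> \<sim>x \<preceq> c \<squnion> \<one> \<longleftrightarrow> x \<preceq> c \<squnion> \<one>"
  by (simp add: neg_join_join_one)

lemma meet_le_join_one_iff:
  "x \<in> C \<Longrightarrow> y \<in> C \<Longrightarrow> c \<in> C \<Longrightarrow> x \<sqinter> y \<preceq> c \<squnion> \<one> \<longleftrightarrow> x \<preceq> c \<squnion> \<one> \<and> y \<preceq> c \<squnion> \<one>"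
  by (simp add: meet_conv_join neg_join_join_one join_le_iff)

lemma J_le_join_one: "x \<in> C \<Longrightarrow> c \<in> C \<Longrightarrow> J x \<preceq> c \<squnion> \<one>"
  using join_left_commute[of "J x" c \<one>] by (simp add: J_join_one)

lemma one_le_join_one: "c \<in> C \<Longrightarrow> \<one> \<preceq> c \<squnion> \<one>"
  using join_left_commute[of \<one> c \<one>] by (simp add: join_idem)

lemma le_join_one: "x \<in> C \<Longrightarrow> x \<preceq> x \<squnion> \<one>"
  by (simp add: join_left_idem)

lemma eq_if_J_eq_fibre_eq:
  assumes x: "x \<in> C" and y: "y \<in> C" and J: "J x = J y"
    and le: "x \<preceq> y \<squnion> \<one>" "y \<preceq> x \<squnion> \<one>"
  shows "x = y"
proof -
  have xy: "x \<squnion> \<one> \<preceq> y \<squnion> \<one>"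
    using join_le_iff[of x \<one> "y \<squnion> \<one>"] one_le_join_one[OF y] le(1) x y by simp
  have yx: "y \<squnion> \<one> \<preceq> x \<squnion> \<one>"
    using join_le_iff[of y \<one> "x \<squnion> \<one>"] one_le_join_one[OF x] le(2) x y by simp
  have "x \<squnion> \<one> = (y \<squnion> \<one>) \<squnion> (x \<squnion> \<one>)"
    using yx by (rule sym)
  also have "\<dots> = (x \<squnion> \<one>) \<squnion> (y \<squnion> \<one>)"
    using x y by (simp add: join_comm)
  also have "\<dots> = y \<squnion> \<one>"
    using xy .
  finally have fibre: "x \<squnion> \<one> = y \<squnion> \<one>" .
  have "x = J x \<sqinter> (x \<squnion> \<one>)"
    using J_meet_join_one[OF x] by (rule sym)
  also have "\<dots> = J y \<sqinter> (y \<squnion> \<one>)"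
    by (simp only: J fibre)
  also have "\<dots> = y"
    using J_meet_join_one[OF y] .
  finally show ?thesis .
qed

text \<open>Coordinates indexed by homomorphisms \<open>f\<close> record \<open>f x\<close>, and the
  coordinate of \<open>c\<close> records whether \<open>x\<close> lies in a fibre below that of \<open>c\<close>. The latter is
  not a homomorphism, so \<open>A\<close> is recovered as a quotient of the subalgebra of all
  elements of the power that represent some \<open>x\<close>, rather than as a subalgebra.\<close>

definition fibre_coord :: "'a \<Rightarrow> 'a \<Rightarrow> wk" where
  "fibre_coord c x = (if x \<preceq> c \<squnion> \<one> then WZ else WH)"

definition index :: "('a \<Rightarrow> wk) set" where
  "index = Collect hom_WK \<union> fibre_coord ` C"

definition represents :: "(('a \<Rightarrow> wk) \<Rightarrow> wk) \<Rightarrow> 'a \<Rightarrow> bool" where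
  "represents g x \<longleftrightarrow> x \<in> C \<and> (\<forall>f. hom_WK f \<longrightarrow> g f = f x) \<and>
     (\<forall>c\<in>C. g (fibre_coord c) = WH \<longleftrightarrow> \<not> x \<preceq> c \<squnion> \<one>)"

definition rep_universe :: "(('a \<Rightarrow> wk) \<Rightarrow> wk) set" where
  "rep_universe = {g \<in> carrier (wk_power index). \<exists>x. represents g x}"

definition rep_hom :: "(('a \<Rightarrow> wk) \<Rightarrow> wk) \<Rightarrow> 'a" where
  "rep_hom g = (THE x. represents g x)"

lemma represents_unique: "represents g x \<Longrightarrow> represents g y \<Longrightarrow> x = y"
proof -
  assume gx: "represents g x" and gy: "represents g y"
  have x: "x \<in> C" and y: "y \<in> C"
    using gx gy unfolding represents_def by blast+
  have "J x = J y"
    using J_eq_if_hom_WK_eq[OF x y] gx gy unfolding represents_def by metis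
  moreover have "x \<preceq> y \<squnion> \<one>" "y \<preceq> x \<squnion> \<one>"
    using gx gy x y le_join_one unfolding represents_def by metis+
  ultimately show ?thesis
    using eq_if_J_eq_fibre_eq x y by blast
qed

lemma rep_hom_eq: "represents g x \<Longrightarrow> rep_hom g = x"
  unfolding rep_hom_def using represents_unique by blast

lemma index_intros: "hom_WK f \<Longrightarrow> f \<in> index" "c \<in> C \<Longrightarrow> fibre_coord c \<in> index"
  unfolding index_def by auto

lemma represents_join:
  "represents g x \<Longrightarrow> represents g' y \<Longrightarrow> represents (join (wk_power index) g g') (x \<squnion> y)"
  unfolding represents_def wk_power_simps
  by (auto simp: index_intros hom_WK_def wk_eq_WH_iff join_le_iff)

lemma represents_meet:
  "represents g x \<Longrightarrow> represents g' y \<Longrightarrow> represents (meet (wk_power index) g g') (x \<sqinter> y)"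
  unfolding represents_def wk_power_simps
  by (auto simp: index_intros hom_WK_def wk_eq_WH_iff meet_le_join_one_iff)

lemma represents_neg: "represents g x \<Longrightarrow> represents (neg (wk_power index) g) (\<sim>x)"
  unfolding represents_def wk_power_simps
  by (auto simp: index_intros hom_WK_def wk_eq_WH_iff neg_le_join_one_iff)

lemma represents_J: "represents g x \<Longrightarrow> represents (jtwo (wk_power index) g) (J x)"
  unfolding represents_def wk_power_simps
  by (auto simp: index_intros hom_WK_def wk_eq_WH_iff J_le_join_one)

lemma represents_zero: "represents (zero (wk_power index)) \<zero>"
  unfolding represents_def wk_power_simps
  by (auto simp: index_intros hom_WK_def zero_join)

lemma represents_one: "represents (one (wk_power index)) \<one>"
  unfolding represents_def wk_power_simps
  by (auto simp: index_intros hom_WK_def one_le_join_one)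

lemma represents_evaluation: "x \<in> C \<Longrightarrow> represents (\<lambda>i. if i \<in> index then i x else undefined) x"
  unfolding represents_def by (auto simp: index_intros fibre_coord_def)

lemma in_V_WK: "in_V_WK A"
proof -
  let ?P = "wk_power index"
  have rep: "g \<in> rep_universe \<Longrightarrow> represents g (rep_hom g)" for g
    unfolding rep_universe_def using rep_hom_eq by auto
  have carrier: "g \<in> rep_universe \<Longrightarrow> g \<in> carrier ?P" for g
    unfolding rep_universe_def by blast
  have universeI: "represents g x \<Longrightarrow> g \<in> carrier ?P \<Longrightarrow> g \<in> rep_universe" for g x
    unfolding rep_universe_def by blast
  have sub: "subuniverse rep_universe ?P"
    unfolding subuniverse_def using algebra_wk_power[of index] rep carrier
    by (auto simp: algebra_def intro!: universeI represents_join represents_meet represents_neg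
      represents_J represents_zero represents_one)
  have onto: "rep_hom ` rep_universe = C"
  proof
    show "rep_hom ` rep_universe \<subseteq> C"
      using rep unfolding represents_def by auto
    show "C \<subseteq> rep_hom ` rep_universe"
    proof
      fix x assume "x \<in> C"
      then have "represents (\<lambda>i. if i \<in> index then i x else undefined) x"
        by (rule represents_evaluation)
      then show "x \<in> rep_hom ` rep_universe"
        using rep_hom_eq universeI by (force simp: wk_power_simps)
    qed
  qed
  have "hom_onto rep_hom rep_universe ?P A"
    unfolding hom_onto_def using onto rep
    by (auto intro!: rep_hom_eq represents_join represents_meet represents_neg represents_J
      represents_zero represents_one)
  then show ?thesis
    unfolding in_V_WK_def in_HSP_def using sub algebra by blast
qed

end

theorem theorem4p5:
  fixes A :: "('a, 'b) alg_scheme"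
  assumes "algebra A"
  shows "(\<forall>I :: 'i set. in_HSP I A \<longrightarrow> sat_K A) \<and> (sat_K A \<longleftrightarrow> in_V_WK A)"
proof (intro conjI allI impI iffI)
  fix I :: "'i set"
  assume "in_HSP I A"
  then show "sat_K A"
    by (rule in_HSP_sat_K)
next
  assume "sat_K A"
  then show "in_V_WK A"
    using K_algebra.in_V_WK K_algebra.intro assms by blast
next
  assume "in_V_WK A"
  then show "sat_K A"
    unfolding in_V_WK_def using in_HSP_sat_K by blast
qed

end
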